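(* In the setting below, there is an absolute constant $C>0$ such that, almost surely, conditionally on $(\mathbf L,\pi)$ the random variable $U^{\mathbf L,\pi}_{n_1}$ is $\mathrm{SE}\big(C\max\{d^{1/2}\sigma^2/n_1,\ (\mathbb E[U_{n_1,n_2}])^{1/2}\sigma/n_1^{1/2}\}\big)$.
   Context: Setting: $2\le n_1\le n_2$; $\mathbf Z_1,\dots,\mathbf Z_{n_1},\mathbf W_1,\dots,\mathbf W_{n_2}$ mutually independent random vectors in $\mathbb R^d$, the $\mathbf Z_i$ identically distributed, the $\mathbf W_{i'}$ identically distributed, each $\mathrm{SG}(\sigma^2)$ (a random vector $\mathbf X$ is $\mathrm{SG}(\sigma^2)$ if $\mathbb E[\exp\{\theta\mathbf v^T(\mathbf X-\mathbb E\mathbf X)\}]\le\exp(\theta^2\|\mathbf v\|_2^2\sigma^2/2)$ for all $\mathbf v,\theta$). Pooled sample $\mathbf D_i=\mathbf Z_i$ ($i\le n_1$), $\mathbf D_{n_1+i'}=\mathbf W_{i'}$. $\pi$ is uniform on $S_{n_1+n_2}$ and $\mathbf L=(l_1,\dots,l_{n_1})$ a uniformly random $n_1$-tuple of distinct elements of $[n_2]$, with $\pi$, $\mathbf L$, data mutually independent. $U^{\mathbf L,\pi}_{n_1}=\frac{1}{n_1(n_1-1)}\sum_{i\ne j,\ i,j\in[n_1]}(\mathbf D_{\pi(i)}-\mathbf D_{\pi(n_1+l_i)})^T(\mathbf D_{\pi(j)}-\mathbf D_{\pi(n_1+l_j)})$, and $\mathbb E[U_{n_1,n_2}]=\|\mathbb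 E\mathbf Z_1-\mathbb E\mathbf W_1\|_2^2$. A real random variable $X$ is $\mathrm{SE}(\tau)$ (conditionally) if $\mathbb E[\exp\{\lambda(X-\mathbb EX)\}]\le\exp(\lambda^2\tau^2)$ for all $|\lambda|\le1/\tau$, expectations taken conditionally on $(\mathbf L,\pi)$. *)

theory Defs
  imports "HOL-Probability.Probability"
begin

text \<open>Vectors in R^d are represented as functions nat => real; only the
coordinates 0..d-1 matter. The measurable space of R^d is the product
PiM {..<d} (\<lambda>_. borel).\<close>

definition vec_space :: "nat \<Rightarrow> (nat \<Rightarrow> real) measure" where
  "vec_space d = PiM {..<d} (\<lambda>_. borel)"

definition vinner :: "nat \<Rightarrow> (nat \<Rightarrow> real) \<Rightarrow> (nat \<Rightarrow> real) \<Rightarrow> real" where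
  "vinner d x y = (\<Sum>k<d. x k * y k)"

definition vmean :: "nat \<Rightarrow> (nat \<Rightarrow> real) measure \<Rightarrow> nat \<Rightarrow> real" where
  "vmean d P = (\<lambda>k. if k < d then (\<integral>x. x k \<partial>P) else 0)"

definition subgaussian_vec :: "nat \<Rightarrow> (nat \<Rightarrow> real) measure \<Rightarrow> real \<Rightarrow> bool" where
  "subgaussian_vec d P s2 \<longleftrightarrow>
     (\<forall>k<d. integrable P (\<lambda>x. x k)) \<and>
     (\<forall>(v::nat \<Rightarrow> real) (\<theta>::real).
        (\<integral>\<^sup>+x. ennreal (exp (\<theta> * vinner d v (\<lambda>k. x k - vmean d P k))) \<partial>P)
          \<le> ennreal (exp (\<theta>\<^sup>2 * vinner d v v * s2 / 2)))"

text \<open>SE(tau): |lambda| <= 1/tau written as |lambda| * tau <= 1 (tau = 0 means all lambda).\<close>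
definition subexponential :: "'a measure \<Rightarrow> ('a \<Rightarrow> real) \<Rightarrow> real \<Rightarrow> bool" where
  "subexponential M X \<tau> \<longleftrightarrow>
     integrable M X \<and>
     (\<forall>t::real. \<bar>t\<bar> * \<tau> \<le> 1 \<longrightarrow>
        (\<integral>\<^sup>+\<omega>. ennreal (exp (t * (X \<omega> - (\<integral>\<omega>'. X \<omega>' \<partial>M)))) \<partial>M)
          \<le> ennreal (exp (t\<^sup>2 * \<tau>\<^sup>2)))"

text \<open>Joint law of the pooled sample D_0..D_{n1+n2-1} (0-based): D_i ~ P for i < n1,
  D_i ~ Q otherwise, all independent.\<close>
definition pooled_law :: "nat \<Rightarrow> nat \<Rightarrow> (nat \<Rightarrow> real) measure \<Rightarrow> (nat \<Rightarrow> real) measure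
    \<Rightarrow> (nat \<Rightarrow> nat \<Rightarrow> real) measure" where
  "pooled_law n1 n2 P Q = PiM {..<n1+n2} (\<lambda>i. if i < n1 then P else Q)"

definition U_stat :: "nat \<Rightarrow> nat \<Rightarrow> (nat \<Rightarrow> nat) \<Rightarrow> (nat \<Rightarrow> nat)
    \<Rightarrow> (nat \<Rightarrow> nat \<Rightarrow> real) \<Rightarrow> real" where
  "U_stat d n1 l \<pi> D =
     (\<Sum>i<n1. \<Sum>j\<in>{..<n1} - {i}.
        vinner d (\<lambda>k. D (\<pi> i) k - D (\<pi> (n1 + l i)) k)
                 (\<lambda>k. D (\<pi> j) k - D (\<pi> (n1 + l j)) k))
     / (real n1 * (real n1 - 1))"

end

theory Submission
  imports Defs
begin

text \<open>Write the i-th pair difference as a centred vector plus a multiple (0 or \<plusminus>1) of the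
difference of the two means. The centred statistic then splits into an off-diagonal quadratic
form in the centred vectors and a linear form in them. The linear form is sub-Gaussian by
independence. The quadratic form is decoupled: it is four times the average, over all splittings
of the pairs into two classes, of the cross form between the classes, so by convexity of exp it
suffices to bound each cross form. Conditionally on one class a cross form is linear in the other,
independent, class, which reduces it to the exponential moment of a sum of squares of
sub-Gaussian variables; that moment is controlled through the power series of exp. Finally, an
exponential moment bound around a constant forces the constant to be the mean.\<close>

section \<open>Exponential moments\<close>

lemma power_div_fact_le_exp:
  fixes x :: real
  assumes "0 \<le> x"
  shows "x ^ n / fact n \<le> exp x"
proof -
  have s: "(\<lambda>k. x ^ k / fact k) sums exp x"
    using exp_converges[of x] by (simp add: divide_inverse mult.commute)
  have "x ^ n / fact n = (\<Sum>k\<in>{n}. x ^ k / fact k)" by simp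
  also have "\<dots> \<le> (\<Sum>k. x ^ k / fact k)"
    using s assms by (intro sum_le_suminf) (auto simp: sums_iff)
  also have "\<dots> = exp x" using s by (simp add: sums_iff)
  finally show ?thesis .
qed

lemma fact_double_le: "(fact (2 * m) :: real) \<le> 4 ^ m * fact m * real m ^ m"
proof -
  have "fact m * fact (2 * m - m) * real (2 * m choose m) = fact (2 * m)"
    using binomial_fact_lemma[of m "2 * m"] by (metis le_add2 mult_2 of_nat_fact of_nat_mult)
  hence e: "fact (2 * m) = fact m * fact m * real (2 * m choose m)" by simp
  have "real (2 * m choose m) \<le> 4 ^ m"
    using binomial_le_pow2[of "2 * m" m]
    by (simp add: power_mult of_nat_le_iff[symmetric] flip: of_nat_power)
  moreover have "(fact m :: real) \<le> real m ^ m" using fact_le_power[of m] by simp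
  ultimately have "fact m * fact m * real (2 * m choose m) \<le> fact m * real m ^ m * 4 ^ m"
    by (intro mult_mono) auto
  thus ?thesis using e by (simp add: mult_ac)
qed

lemma even_moment_le_of_mgf:
  fixes Z :: "'a \<Rightarrow> real"
  assumes Z: "Z \<in> borel_measurable M" and "\<beta> > 0" "m \<ge> 1"
    and mgf: "\<And>\<theta>. (\<integral>\<^sup>+x. ennreal (exp (\<theta> * Z x)) \<partial>M) \<le> ennreal (exp (\<theta>\<^sup>2 * \<beta>))"
  shows "(\<integral>\<^sup>+x. ennreal (Z x ^ (2 * m)) \<partial>M) \<le> ennreal (2 * fact (2 * m) * (exp 1 * \<beta> / m) ^ m)"
proof -
  define \<theta> where "\<theta> = sqrt (m / \<beta>)"
  define K where "K = fact (2 * m) / \<theta> ^ (2 * m)"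
  have "\<theta> > 0" using assms by (simp add: \<theta>_def)
  have \<theta>_sq: "\<theta>\<^sup>2 * \<beta> = m" using assms by (simp add: \<theta>_def)
  have \<theta>_pow: "\<theta> ^ (2 * m) = (m / \<beta>) ^ m" using assms by (simp add: \<theta>_def power_mult)
  have "K \<ge> 0" by (simp add: K_def)
  have pointwise: "Z x ^ (2 * m) \<le> K * (exp (\<theta> * Z x) + exp (- \<theta> * Z x))" for x
  proof -
    have "(\<theta> * Z x) ^ (2 * m) / fact (2 * m) \<le> exp \<bar>\<theta> * Z x\<bar>"
      using power_div_fact_le_exp[of "\<bar>\<theta> * Z x\<bar>" "2 * m"] by (simp add: power_mult power2_abs)
    also have "\<dots> \<le> exp (\<theta> * Z x) + exp (- \<theta> * Z x)"
      by (cases "\<theta> * Z x \<ge> 0") (auto simp: add_increasing add_increasing2)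
    finally show ?thesis
      using \<open>\<theta> > 0\<close> by (simp add: K_def power_mult_distrib field_simps)
  qed
  have "(\<integral>\<^sup>+x. ennreal (Z x ^ (2 * m)) \<partial>M)
      \<le> (\<integral>\<^sup>+x. ennreal K * (ennreal (exp (\<theta> * Z x)) + ennreal (exp (- \<theta> * Z x))) \<partial>M)"
    using pointwise \<open>K \<ge> 0\<close>
    by (intro nn_integral_mono) (simp add: ennreal_mult[symmetric] ennreal_plus[symmetric] del: ennreal_plus)
  also have "\<dots> = ennreal K * ((\<integral>\<^sup>+x. ennreal (exp (\<theta> * Z x)) \<partial>M) + (\<integral>\<^sup>+x. ennreal (exp (- \<theta> * Z x)) \<partial>M))"
    using Z by (simp add: nn_integral_cmult nn_integral_add)
  also have "\<dots> \<le> ennreal K * (ennreal (exp (\<theta>\<^sup>2 * \<beta>)) + ennreal (exp ((- \<theta>)\<^sup>2 * \<beta>)))"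
    by (intro mult_left_mono add_mono mgf) auto
  also have "\<dots> = ennreal (K * (2 * exp (\<theta>\<^sup>2 * \<beta>)))"
    using \<open>K \<ge> 0\<close> by (simp add: ennreal_mult ennreal_plus[symmetric] del: ennreal_plus)
  also have "K * (2 * exp (\<theta>\<^sup>2 * \<beta>)) = 2 * fact (2 * m) * (exp 1 * \<beta> / m) ^ m"
    using assms unfolding \<theta>_sq K_def \<theta>_pow
    by (simp add: exp_of_nat_mult[symmetric] power_divide power_mult_distrib field_simps)
  finally show ?thesis .
qed

lemma moment_series_term_le:
  assumes "m \<ge> 1" "s \<ge> 0" "\<beta> > 0"
  shows "s ^ m / fact m * (2 * fact (2 * m) * (exp 1 * \<beta> / m) ^ m) \<le> 2 * (12 * s * \<beta>) ^ m"
proof -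
  have "s ^ m / fact m * (2 * fact (2 * m) * (exp 1 * \<beta> / m) ^ m)
      = 2 * (fact (2 * m) / (fact m * real m ^ m)) * (exp 1 * s * \<beta>) ^ m"
    using assms by (simp add: power_divide power_mult_distrib field_simps)
  also have "\<dots> \<le> 2 * 4 ^ m * (3 * s * \<beta>) ^ m"
  proof -
    have "fact (2 * m) / (fact m * real m ^ m) \<le> (4::real) ^ m"
      using fact_double_le[of m] assms by (simp add: divide_le_eq mult_ac)
    moreover have "(exp 1 * s * \<beta>) ^ m \<le> (3 * s * \<beta>) ^ m"
      using exp_le assms by (intro power_mono mult_right_mono) auto
    ultimately have "fact (2 * m) / (fact m * real m ^ m) * (exp 1 * s * \<beta>) ^ m \<le> 4 ^ m * (3 * s * \<beta>) ^ m"
      by (rule mult_mono) (use assms in auto)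
    thus ?thesis by simp
  qed
  also have "\<dots> = 2 * (12 * s * \<beta>) ^ m"
    by (simp add: power_mult_distrib[symmetric] mult_ac)
  finally show ?thesis .
qed

lemma ennreal_exp_square_series:
  fixes s z :: real
  assumes "s \<ge> 0"
  shows "ennreal (exp (s * z\<^sup>2)) = (\<Sum>m. ennreal (s ^ m / fact m * z ^ (2 * m)))"
proof -
  have "(\<lambda>m. s ^ m / fact m * z ^ (2 * m)) sums exp (s * z\<^sup>2)"
    using exp_converges[of "s * z\<^sup>2"]
    by (simp add: power_mult_distrib power_mult[symmetric] divide_inverse mult_ac)
  thus ?thesis
    using assms by (subst (asm) sums_ennreal[symmetric]) (auto simp: power_mult sums_iff)
qed

lemma geometric_moment_sum_le_exp:
  fixes x :: real
  assumes "0 \<le> x" "x \<le> 1/64"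
  shows "(\<lambda>m. if m = 0 then 1 else 2 * (12 * x) ^ m) sums (2 / (1 - 12 * x) - 1)"
    and "2 / (1 - 12 * x) - 1 \<le> exp (64 * x)"
proof -
  have "(\<lambda>m. 2 * (12 * x) ^ m - (if m = 0 then 1 else 0)) sums (2 * (1 / (1 - 12 * x)) - 1)"
    using assms sums_single[of 0 "\<lambda>_. 1::real"] by (intro sums_diff sums_mult geometric_sums) auto
  moreover have "(\<lambda>m. 2 * (12 * x) ^ m - (if m = 0 then 1 else 0)) = (\<lambda>m. if m = 0 then 1 else 2 * (12 * x) ^ m)"
    by auto
  ultimately show "(\<lambda>m. if m = 0 then 1 else 2 * (12 * x) ^ m) sums (2 / (1 - 12 * x) - 1)" by simp
  have "x * (64 * x) \<le> x * 1"
    using assms by (intro mult_left_mono) auto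
  hence "2 / (1 - 12 * x) - 1 \<le> 1 + 64 * x"
    using assms by (simp add: field_simps)
  also have "\<dots> \<le> exp (64 * x)" using exp_ge_add_one_self[of "64 * x"] by simp
  finally show "2 / (1 - 12 * x) - 1 \<le> exp (64 * x)" .
qed

lemma nn_integral_exp_square_le_pos:
  fixes Z :: "'a \<Rightarrow> real"
  assumes "prob_space M" and Z: "Z \<in> borel_measurable M" and "\<beta> > 0" "s \<ge> 0" "s * \<beta> \<le> 1/64"
    and mgf: "\<And>\<theta>. (\<integral>\<^sup>+x. ennreal (exp (\<theta> * Z x)) \<partial>M) \<le> ennreal (exp (\<theta>\<^sup>2 * \<beta>))"
  shows "(\<integral>\<^sup>+x. ennreal (exp (s * (Z x)\<^sup>2)) \<partial>M) \<le> ennreal (exp (64 * s * \<beta>))"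
proof -
  interpret prob_space M by fact
  define b where "b m = (if m = 0 then 1 else 2 * (12 * (s * \<beta>)) ^ m)" for m :: nat
  have "s * \<beta> \<ge> 0" using assms by simp
  note geometric = geometric_moment_sum_le_exp[OF this \<open>s * \<beta> \<le> 1/64\<close>, folded b_def[abs_def]]
  have term_le: "(\<integral>\<^sup>+x. ennreal (s ^ m / fact m * Z x ^ (2 * m)) \<partial>M) \<le> ennreal (b m)" for m
  proof (cases "m = 0")
    case False
    have "(\<integral>\<^sup>+x. ennreal (s ^ m / fact m * Z x ^ (2 * m)) \<partial>M)
        = ennreal (s ^ m / fact m) * (\<integral>\<^sup>+x. ennreal (Z x ^ (2 * m)) \<partial>M)"
      using assms by (subst nn_integral_cmult[symmetric])
        (auto simp: ennreal_mult[symmetric] power_mult intro!: nn_integral_cong)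
    also have "\<dots> \<le> ennreal (s ^ m / fact m) * ennreal (2 * fact (2 * m) * (exp 1 * \<beta> / m) ^ m)"
      using False assms by (intro mult_left_mono even_moment_le_of_mgf) auto
    also have "\<dots> = ennreal (s ^ m / fact m * (2 * fact (2 * m) * (exp 1 * \<beta> / m) ^ m))"
      using assms by (intro ennreal_mult[symmetric]) auto
    also have "\<dots> \<le> ennreal (b m)"
      using moment_series_term_le[of m s \<beta>] False assms by (intro ennreal_leI) (simp add: b_def mult_ac)
    finally show ?thesis .
  qed (simp add: b_def emeasure_space_1)
  have "(\<integral>\<^sup>+x. ennreal (exp (s * (Z x)\<^sup>2)) \<partial>M)
      = (\<Sum>m. (\<integral>\<^sup>+x. ennreal (s ^ m / fact m * Z x ^ (2 * m)) \<partial>M))"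
    unfolding ennreal_exp_square_series[OF \<open>s \<ge> 0\<close>] by (rule nn_integral_suminf) (use Z in measurable)
  also have "\<dots> \<le> (\<Sum>m. ennreal (b m))"
    by (intro suminf_le term_le) auto
  also have "\<dots> = ennreal (\<Sum>m. b m)"
    using geometric(1) \<open>s * \<beta> \<ge> 0\<close> by (intro suminf_ennreal2) (auto simp: sums_iff, simp add: b_def)
  also have "(\<Sum>m. b m) = 2 / (1 - 12 * (s * \<beta>)) - 1"
    using geometric(1) by (rule sums_unique[symmetric])
  also have "\<dots> \<le> exp (64 * s * \<beta>)"
    using geometric(2) by (simp add: mult.assoc)
  finally show ?thesis by (simp add: ennreal_leI)
qed

lemma nn_integral_exp_square_le:
  fixes Z :: "'a \<Rightarrow> real"
  assumes "prob_space M" and Z: "Z \<in> borel_measurable M" and "\<beta> \<ge> 0" "s \<ge> 0" "s * \<beta> \<le> 1/64"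
    and mgf: "\<And>\<theta>. (\<integral>\<^sup>+x. ennreal (exp (\<theta> * Z x)) \<partial>M) \<le> ennreal (exp (\<theta>\<^sup>2 * \<beta>))"
  shows "(\<integral>\<^sup>+x. ennreal (exp (s * (Z x)\<^sup>2)) \<partial>M) \<le> ennreal (exp (64 * s * \<beta>))"
proof (cases "\<beta> > 0")
  case True
  thus ?thesis using nn_integral_exp_square_le_pos[OF assms(1,2) True assms(4,5) mgf] by simp
next
  case False
  hence "\<beta> = 0" using assms by simp
  \<comment> \<open>The hypothesis also holds with any \<beta>' > 0 in place of \<beta>; let \<beta>' tend to 0.\<close>
  have "(\<integral>\<^sup>+x. ennreal (exp (s * (Z x)\<^sup>2)) \<partial>M) \<le> 1"
  proof (rule ennreal_le_epsilon)
    fix e :: real assume "0 < e"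
    define \<beta>' where "\<beta>' = min 1 e / (128 * (s + 1))"
    have "\<beta>' > 0" using \<open>0 < e\<close> assms by (simp add: \<beta>'_def)
    have "64 * s * \<beta>' = min 1 e / 2 * (s / (s + 1))"
      using assms by (simp add: \<beta>'_def field_simps)
    also have "\<dots> \<le> min 1 e / 2"
      using assms \<open>0 < e\<close> by (intro mult_left_le) auto
    finally have small: "64 * s * \<beta>' \<le> min 1 e / 2" .
    have "(\<integral>\<^sup>+x. ennreal (exp (s * (Z x)\<^sup>2)) \<partial>M) \<le> ennreal (exp (64 * s * \<beta>'))"
    proof (rule nn_integral_exp_square_le_pos[OF assms(1,2) \<open>\<beta>' > 0\<close> assms(4)])
      show "s * \<beta>' \<le> 1/64" using small by simp
      show "(\<integral>\<^sup>+x. ennreal (exp (\<theta> * Z x)) \<partial>M) \<le> ennreal (exp (\<theta>\<^sup>2 * \<beta>'))" for \<theta>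
        using mgf[of \<theta>] \<open>\<beta> = 0\<close> \<open>\<beta>' > 0\<close> by (auto intro: order_trans ennreal_leI)
    qed
    also have "ennreal (exp (64 * s * \<beta>')) \<le> ennreal (1 + e)"
    proof (rule ennreal_leI)
      have "exp (64 * s * \<beta>') \<le> 1 + 2 * (64 * s * \<beta>')"
        using small assms \<open>\<beta>' > 0\<close> by (intro real_exp_bound_lemma) auto
      thus "exp (64 * s * \<beta>') \<le> 1 + e" using small by linarith
    qed
    also have "\<dots> = 1 + ennreal e"
      using \<open>0 < e\<close> by (simp add: ennreal_plus)
    finally show "(\<integral>\<^sup>+x. ennreal (exp (s * (Z x)\<^sup>2)) \<partial>M) \<le> 1 + ennreal e" .
  qed
  thus ?thesis using \<open>\<beta> = 0\<close> by simp
qed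

lemma exp_mean_le_mean_exp:
  fixes y :: "'a \<Rightarrow> real"
  assumes "finite A" "A \<noteq> {}"
  shows "exp ((\<Sum>i\<in>A. y i) / card A) \<le> (\<Sum>i\<in>A. exp (y i)) / card A"
proof -
  have "card A > 0" using assms by (simp add: card_gt_0_iff)
  hence "exp (\<Sum>i\<in>A. (1 / card A) *\<^sub>R y i) \<le> (\<Sum>i\<in>A. (1 / card A) * exp (y i))"
    by (intro convex_on_sum[OF assms exp_convex]) auto
  thus ?thesis by (simp add: sum_divide_distrib[symmetric])
qed

lemma nn_integral_exp_mean_le:
  fixes g :: "'i \<Rightarrow> 'a \<Rightarrow> real"
  assumes A: "finite A" "A \<noteq> {}" and g: "\<And>i. i \<in> A \<Longrightarrow> g i \<in> borel_measurable M"
    and bound: "\<And>i. i \<in> A \<Longrightarrow> (\<integral>\<^sup>+x. ennreal (exp (g i x)) \<partial>M) \<le> ennreal B"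
  shows "(\<integral>\<^sup>+x. ennreal (exp ((\<Sum>i\<in>A. g i x) / card A)) \<partial>M) \<le> ennreal B"
proof -
  define c where "c = ennreal (1 / card A)"
  have "(\<integral>\<^sup>+x. ennreal (exp ((\<Sum>i\<in>A. g i x) / card A)) \<partial>M)
      \<le> (\<integral>\<^sup>+x. (\<Sum>i\<in>A. c * ennreal (exp (g i x))) \<partial>M)"
  proof (intro nn_integral_mono)
    fix x
    have "ennreal (exp ((\<Sum>i\<in>A. g i x) / card A)) \<le> ennreal (\<Sum>i\<in>A. 1 / card A * exp (g i x))"
      using exp_mean_le_mean_exp[OF A, of "\<lambda>i. g i x"] by (intro ennreal_leI) (simp add: sum_divide_distrib)
    thus "ennreal (exp ((\<Sum>i\<in>A. g i x) / card A)) \<le> (\<Sum>i\<in>A. c * ennreal (exp (g i x)))"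
      by (simp add: c_def ennreal_mult[symmetric] sum_ennreal del: ennreal_1)
  qed
  also have "\<dots> = (\<Sum>i\<in>A. c * (\<integral>\<^sup>+x. ennreal (exp (g i x)) \<partial>M))"
    using g by (simp add: nn_integral_sum nn_integral_cmult)
  also have "\<dots> \<le> (\<Sum>i\<in>A. c * ennreal B)"
    using bound by (intro sum_mono mult_left_mono) auto
  also have "\<dots> = (of_nat (card A) * c) * ennreal B"
    by (simp add: mult.assoc)
  also have "of_nat (card A) * c = 1"
    using A by (simp add: c_def ennreal_of_nat_eq_real_of_nat ennreal_mult[symmetric])
  finally show ?thesis by simp
qed

lemma nn_integral_exp_sum_squares_le:
  fixes Z :: "nat \<Rightarrow> 'a \<Rightarrow> real"
  assumes "prob_space M" and Z: "\<And>k. k < d \<Longrightarrow> Z k \<in> borel_measurable M"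
    and "\<beta> \<ge> 0" "c \<ge> 0" "real d * c * \<beta> \<le> 1/64"
    and mgf: "\<And>k \<theta>. k < d \<Longrightarrow> (\<integral>\<^sup>+x. ennreal (exp (\<theta> * Z k x)) \<partial>M) \<le> ennreal (exp (\<theta>\<^sup>2 * \<beta>))"
  shows "(\<integral>\<^sup>+x. ennreal (exp (c * (\<Sum>k<d. (Z k x)\<^sup>2))) \<partial>M) \<le> ennreal (exp (64 * real d * c * \<beta>))"
proof (cases "d = 0")
  case True
  thus ?thesis using prob_space.emeasure_space_1[OF assms(1)] by simp
next
  case False
  have "(\<Sum>k<d. real d * c * (Z k x)\<^sup>2) = real d * (c * (\<Sum>k<d. (Z k x)\<^sup>2))" for x
    by (simp add: sum_distrib_left mult.assoc)
  hence "c * (\<Sum>k<d. (Z k x)\<^sup>2) = (\<Sum>k<d. real d * c * (Z k x)\<^sup>2) / card {..<d}" for x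
    using False by simp
  moreover have "(\<integral>\<^sup>+x. ennreal (exp ((\<Sum>k<d. real d * c * (Z k x)\<^sup>2) / card {..<d})) \<partial>M)
      \<le> ennreal (exp (64 * real d * c * \<beta>))"
  proof (rule nn_integral_exp_mean_le)
    fix k assume "k \<in> {..<d}"
    hence "(\<integral>\<^sup>+x. ennreal (exp (real d * c * (Z k x)\<^sup>2)) \<partial>M) \<le> ennreal (exp (64 * (real d * c) * \<beta>))"
      using assms by (intro nn_integral_exp_square_le[OF assms(1) Z _ _ _ mgf]) auto
    thus "(\<integral>\<^sup>+x. ennreal (exp (real d * c * (Z k x)\<^sup>2)) \<partial>M) \<le> ennreal (exp (64 * real d * c * \<beta>))"
      by (simp add: mult.assoc)
  qed (use False Z in auto)
  ultimately show ?thesis by simp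
qed

lemma eq_zero_of_mul_le_exp_square:
  fixes a \<tau> :: real
  assumes "\<tau> \<ge> 0" and bound: "\<And>t. \<bar>t\<bar> * \<tau> \<le> 1 \<Longrightarrow> t * a \<le> exp (t\<^sup>2 * \<tau>\<^sup>2) - 1"
  shows "a = 0"
proof (rule ccontr)
  assume "a \<noteq> 0"
  define h where "h = min (1 / (2 * \<tau> + 1)) (\<bar>a\<bar> / (2 * \<tau>\<^sup>2 + 1))"
  have pos: "2 * \<tau>\<^sup>2 + 1 > 0" "2 * \<tau> + 1 > 0" using zero_le_power2[of \<tau>] assms by linarith+
  hence "h > 0" using \<open>a \<noteq> 0\<close> by (simp add: h_def)
  have "h * \<tau> \<le> \<tau> / (2 * \<tau> + 1)"
    using assms by (intro mult_right_mono[of h "1 / (2 * \<tau> + 1)", simplified]) (auto simp: h_def)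
  also have "\<dots> \<le> 1/2" using assms by (simp add: field_simps)
  finally have h\<tau>: "h * \<tau> \<le> 1/2" .
  have "(sgn a)\<^sup>2 = 1" using \<open>a \<noteq> 0\<close> by (cases "a > 0") auto
  have "h * \<bar>a\<bar> = (sgn a * h) * a" by (simp add: abs_sgn mult_ac)
  also have "\<dots> \<le> exp ((h * \<tau>)\<^sup>2) - 1"
    using bound[of "sgn a * h"] h\<tau> \<open>h > 0\<close> \<open>a \<noteq> 0\<close> \<open>(sgn a)\<^sup>2 = 1\<close>
    by (simp add: abs_mult power_mult_distrib)
  also have "\<dots> \<le> 2 * (h * \<tau>)\<^sup>2"
  proof -
    have "(h * \<tau>)\<^sup>2 \<le> (1/2)\<^sup>2" using h\<tau> \<open>h > 0\<close> assms by (intro power_mono) auto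
    thus ?thesis using real_exp_bound_lemma[of "(h * \<tau>)\<^sup>2"] by (simp add: power2_eq_square)
  qed
  finally have "\<bar>a\<bar> \<le> h * (2 * \<tau>\<^sup>2)"
    using \<open>h > 0\<close> by (simp add: power2_eq_square mult_ac)
  also have "\<dots> \<le> \<bar>a\<bar> / (2 * \<tau>\<^sup>2 + 1) * (2 * \<tau>\<^sup>2)"
    by (intro mult_right_mono) (auto simp: h_def)
  also have "\<dots> < \<bar>a\<bar>"
    using \<open>a \<noteq> 0\<close> pos by (simp add: field_simps)
  finally show False by simp
qed

lemma integrable_of_two_sided_exp:
  fixes X :: "'a \<Rightarrow> real"
  assumes "finite_measure M" and X: "X \<in> borel_measurable M" and "t > 0"
    and pos: "integrable M (\<lambda>x. exp (t * (X x - c)))" and neg: "integrable M (\<lambda>x. exp (- t * (X x - c)))"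
  shows "integrable M X"
proof -
  have abs_le: "t * \<bar>X x - c\<bar> \<le> exp (t * (X x - c)) + exp (- t * (X x - c))" for x
  proof (cases "X x - c \<ge> 0")
    case True
    have "t * (X x - c) \<le> exp (t * (X x - c))"
      using exp_ge_add_one_self[of "t * (X x - c)"] by linarith
    moreover have "t * \<bar>X x - c\<bar> = t * (X x - c)" using True by simp
    moreover have "0 \<le> exp (- t * (X x - c))" by simp
    ultimately show ?thesis by linarith
  next
    case False
    have "- t * (X x - c) \<le> exp (- t * (X x - c))"
      using exp_ge_add_one_self[of "- t * (X x - c)"] by linarith
    moreover have "t * \<bar>X x - c\<bar> = - t * (X x - c)" using False by (simp add: algebra_simps)
    moreover have "0 \<le> exp (t * (X x - c))" by simp
    ultimately show ?thesis by linarith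
  qed
  have "integrable M (\<lambda>x. X x - c)"
  proof (rule Bochner_Integration.integrable_bound[OF _ _ AE_I2])
    show "integrable M (\<lambda>x. (exp (t * (X x - c)) + exp (- t * (X x - c))) / t)"
      using pos neg by simp
    show "(\<lambda>x. X x - c) \<in> borel_measurable M" using X by measurable
    show "norm (X x - c) \<le> norm ((exp (t * (X x - c)) + exp (- t * (X x - c))) / t)" for x
      using abs_le[of x] \<open>t > 0\<close> by (simp add: pos_le_divide_eq mult.commute)
  qed
  moreover have "integrable M (\<lambda>_. c)"
    using assms(1) by (rule finite_measure.integrable_const)
  ultimately have "integrable M (\<lambda>x. (X x - c) + c)"
    by (rule Bochner_Integration.integrable_add)
  thus ?thesis by simp
qed

lemma subexponential_of_mgf_le:
  fixes X :: "'a \<Rightarrow> real"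
  assumes "prob_space M" and X: "X \<in> borel_measurable M" and "\<tau> \<ge> 0"
    and mgf: "\<And>t. \<bar>t\<bar> * \<tau> \<le> 1 \<Longrightarrow> (\<integral>\<^sup>+x. ennreal (exp (t * (X x - c))) \<partial>M) \<le> ennreal (exp (t\<^sup>2 * \<tau>\<^sup>2))"
  shows "subexponential M X \<tau>"
proof -
  interpret prob_space M by fact
  have exp_int: "integrable M (\<lambda>x. exp (t * (X x - c)))" if "\<bar>t\<bar> * \<tau> \<le> 1" for t
  proof (rule integrableI_bounded)
    show "(\<lambda>x. exp (t * (X x - c))) \<in> borel_measurable M" using X by measurable
    show "(\<integral>\<^sup>+x. ennreal (norm (exp (t * (X x - c)))) \<partial>M) < \<infinity>"
      using mgf[OF that] by (simp add: le_less_trans)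
  qed
  define t0 where "t0 = 1 / (\<tau> + 1)"
  have "t0 > 0" using assms by (simp add: t0_def)
  have "\<bar>t0\<bar> * \<tau> \<le> 1" "\<bar>- t0\<bar> * \<tau> \<le> 1"
    using assms by (simp_all add: t0_def divide_le_eq)
  hence int: "integrable M X"
    using integrable_of_two_sided_exp[OF finite_measure_axioms X \<open>t0 > 0\<close>] exp_int by blast
  \<comment> \<open>Since 1 + y \<le> exp y, the bound for small t forces the mean to be c.\<close>
  have "expectation X - c = 0"
  proof (rule eq_zero_of_mul_le_exp_square[OF \<open>\<tau> \<ge> 0\<close>])
    fix t assume t: "\<bar>t\<bar> * \<tau> \<le> 1"
    have "1 + t * (expectation X - c) = (\<integral>x. 1 + t * (X x - c) \<partial>M)"
      using int by (simp add: prob_space algebra_simps)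
    also have "\<dots> \<le> (\<integral>x. exp (t * (X x - c)) \<partial>M)"
      by (rule integral_mono) (use int exp_int[OF t] in auto)
    also have "\<dots> \<le> exp (t\<^sup>2 * \<tau>\<^sup>2)"
      by (rule integral_real_bounded) (use mgf[OF t] in auto)
    finally show "t * (expectation X - c) \<le> exp (t\<^sup>2 * \<tau>\<^sup>2) - 1" by simp
  qed
  thus ?thesis using int mgf by (simp add: subexponential_def)
qed

lemma scaled_squares_le:
  fixes A B t :: real
  assumes "0 \<le> A" "0 \<le> B" and t: "\<bar>t\<bar> * (128 * max A B) \<le> 1"
  shows "16384 * (t\<^sup>2 * A\<^sup>2) \<le> 1"
    and "max (16384 * (t\<^sup>2 * A\<^sup>2)) (16 * (t\<^sup>2 * B\<^sup>2)) \<le> t\<^sup>2 * (128 * max A B)\<^sup>2"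
proof -
  define m where "m = max A B"
  have tau: "t\<^sup>2 * (128 * m)\<^sup>2 = 16384 * (t\<^sup>2 * m\<^sup>2)" by (simp add: power_mult_distrib)
  have "(\<bar>t\<bar> * (128 * m))\<^sup>2 \<le> 1\<^sup>2"
    using t assms unfolding m_def[symmetric] by (intro power_mono) (auto simp: m_def)
  hence "16384 * (t\<^sup>2 * m\<^sup>2) \<le> 1" by (simp add: power_mult_distrib)
  have tA: "t\<^sup>2 * A\<^sup>2 \<le> t\<^sup>2 * m\<^sup>2" and tB: "t\<^sup>2 * B\<^sup>2 \<le> t\<^sup>2 * m\<^sup>2"
    using assms by (auto simp: m_def intro!: mult_left_mono power_mono)
  show "16384 * (t\<^sup>2 * A\<^sup>2) \<le> 1"
    using tA \<open>16384 * (t\<^sup>2 * m\<^sup>2) \<le> 1\<close> by linarith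
  have "0 \<le> t\<^sup>2 * B\<^sup>2" by simp
  thus "max (16384 * (t\<^sup>2 * A\<^sup>2)) (16 * (t\<^sup>2 * B\<^sup>2)) \<le> t\<^sup>2 * (128 * max A B)\<^sup>2"
    unfolding m_def[symmetric] tau using tA tB by (intro max.boundedI) linarith+
qed

section \<open>Decoupling\<close>

lemma card_Pow_mem_not_mem:
  assumes "i < n" "j < n" "i \<noteq> j"
  shows "card {S \<in> Pow {..<n}. i \<in> S \<and> j \<notin> S} = 2 ^ (n - 2)"
proof -
  let ?A = "{..<n} - {i, j}"
  have "bij_betw (insert i) (Pow ?A) {S \<in> Pow {..<n}. i \<in> S \<and> j \<notin> S}"
    using assms by (intro bij_betw_byWitness[where f' = "\<lambda>S. S - {i}"]) auto
  hence "card {S \<in> Pow {..<n}. i \<in> S \<and> j \<notin> S} = card (Pow ?A)" by (simp add: bij_betw_same_card)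
  also have "\<dots> = 2 ^ (n - 2)" using assms by (simp add: card_Pow card_Diff_subset)
  finally show ?thesis .
qed

lemma sum_cross_eq_sum_if:
  fixes q :: "nat \<Rightarrow> nat \<Rightarrow> 'a :: comm_monoid_add"
  assumes "S \<subseteq> {..<n}"
  shows "(\<Sum>i\<in>S. \<Sum>j\<in>{..<n} - S. q i j) = (\<Sum>i<n. \<Sum>j<n. if i \<in> S \<and> j \<notin> S then q i j else 0)"
proof -
  have "(\<Sum>i<n. \<Sum>j<n. if i \<in> S \<and> j \<notin> S then q i j else 0)
      = (\<Sum>i<n. if i \<in> S then (\<Sum>j<n. if j \<notin> S then q i j else 0) else 0)"
    by (intro sum.cong) auto
  also have "\<dots> = (\<Sum>i\<in>{i \<in> {..<n}. i \<in> S}. \<Sum>j\<in>{j \<in> {..<n}. j \<notin> S}. q i j)"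
    by (simp only: sum.inter_filter[OF finite_lessThan])
  also have "{i \<in> {..<n}. i \<in> S} = S" using assms by auto
  also have "{j \<in> {..<n}. j \<notin> S} = {..<n} - S" by auto
  finally show ?thesis ..
qed

lemma sum_Pow_cross_eq:
  fixes q :: "nat \<Rightarrow> nat \<Rightarrow> real"
  shows "(\<Sum>S\<in>Pow {..<n}. \<Sum>i\<in>S. \<Sum>j\<in>{..<n} - S. q i j)
      = 2 ^ (n - 2) * (\<Sum>i<n. \<Sum>j\<in>{..<n} - {i}. q i j)"
proof -
  have count: "(\<Sum>S\<in>Pow {..<n}. if i \<in> S \<and> j \<notin> S then q i j else 0) = (if i = j then 0 else 2 ^ (n - 2) * q i j)"
    if "i < n" "j < n" for i j
  proof (cases "i = j")
    case False
    have "(\<Sum>S\<in>Pow {..<n}. if i \<in> S \<and> j \<notin> S then q i j else 0) = card {S \<in> Pow {..<n}. i \<in> S \<and> j \<notin> S} * q i j"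
      by (simp add: sum.inter_filter[symmetric])
    thus ?thesis using card_Pow_mem_not_mem[OF that False] False by simp
  qed simp
  have "(\<Sum>S\<in>Pow {..<n}. \<Sum>i\<in>S. \<Sum>j\<in>{..<n} - S. q i j)
      = (\<Sum>S\<in>Pow {..<n}. \<Sum>i<n. \<Sum>j<n. if i \<in> S \<and> j \<notin> S then q i j else 0)"
    by (intro sum.cong refl sum_cross_eq_sum_if) auto
  also have "\<dots> = (\<Sum>i<n. \<Sum>j<n. \<Sum>S\<in>Pow {..<n}. if i \<in> S \<and> j \<notin> S then q i j else 0)"
    by (simp add: sum.swap[of _ "Pow {..<n}"])
  also have "\<dots> = (\<Sum>i<n. \<Sum>j<n. if i = j then 0 else 2 ^ (n - 2) * q i j)"
    by (simp add: count)
  also have "\<dots> = 2 ^ (n - 2) * (\<Sum>i<n. \<Sum>j\<in>{..<n} - {i}. q i j)"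
    by (simp add: sum_distrib_left sum_diff1 sum.If_cases Diff_eq Int_commute)
  finally show ?thesis .
qed

lemma sum_offdiag_swap:
  fixes F :: "'i \<Rightarrow> 'i \<Rightarrow> 'a :: comm_monoid_add"
  assumes "finite A"
  shows "(\<Sum>i\<in>A. \<Sum>j\<in>A - {i}. F i j) = (\<Sum>j\<in>A. \<Sum>i\<in>A - {j}. F i j)"
proof -
  have "(\<Sum>j\<in>A - {i}. G j) = (\<Sum>j\<in>A. if j = i then 0 else G j)" for i and G :: "'i \<Rightarrow> 'a"
    using assms by (simp add: sum.If_cases Diff_eq Int_commute Compl_eq)
  thus ?thesis
    using sum.swap[of "\<lambda>i j. if j = i then 0 else F i j" A A] by (simp add: eq_commute)
qed

section \<open>Independent sub-Gaussian vectors\<close>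

lemma borel_measurable_vinner:
  assumes "\<And>k. k < d \<Longrightarrow> (\<lambda>x. u x k) \<in> borel_measurable X"
    and "\<And>k. k < d \<Longrightarrow> (\<lambda>x. v x k) \<in> borel_measurable X"
  shows "(\<lambda>x. vinner d (u x) (v x)) \<in> borel_measurable X"
  unfolding vinner_def using assms by (intro borel_measurable_sum borel_measurable_times) auto

lemma vinner_unit_left:
  assumes "k < d"
  shows "vinner d (\<lambda>k'. if k' = k then \<theta> else 0) v = \<theta> * v k"
proof -
  have "(\<Sum>k'<d. (if k' = k then \<theta> else 0) * v k') = (\<Sum>k'<d. if k' = k then \<theta> * v k else 0)"
    by (rule sum.cong) auto
  thus ?thesis using assms by (simp add: vinner_def)
qed

locale indep_subgaussian_vectors =
  fixes d :: nat and \<sigma> :: real and M :: "nat \<Rightarrow> (nat \<Rightarrow> real) measure"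
  assumes prob_space_M: "\<And>j. prob_space (M j)"
    and sets_M: "\<And>j. sets (M j) = sets (vec_space d)"
    and subgaussian_M: "\<And>j. subgaussian_vec d (M j) (\<sigma>\<^sup>2)"
begin

abbreviation mean :: "nat \<Rightarrow> nat \<Rightarrow> real" where
  "mean j \<equiv> vmean d (M j)"

lemma product_sigma_finite_M: "product_sigma_finite M"
  unfolding product_sigma_finite_def using prob_space_M prob_space_imp_sigma_finite by blast

lemma measurable_coordinate: "k < d \<Longrightarrow> (\<lambda>x. x k) \<in> borel_measurable (M j)"
  using measurable_cong_sets[OF sets_M[of j] refl]
  by (auto simp: vec_space_def intro!: measurable_component_singleton)

lemma measurable_data_coordinate: "j \<in> J \<Longrightarrow> k < d \<Longrightarrow> (\<lambda>D. D j k) \<in> borel_measurable (PiM J M)"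
  by (rule measurable_compose[OF measurable_component_singleton[of j J M] measurable_coordinate[of k j]])

lemma nn_integral_exp_vinner_le:
  "(\<integral>\<^sup>+x. ennreal (exp (vinner d w (\<lambda>k. x k - mean j k))) \<partial>M j) \<le> ennreal (exp (\<sigma>\<^sup>2 / 2 * vinner d w w))"
  using subgaussian_M[of j] unfolding subgaussian_vec_def
  by (auto dest!: spec[of _ w] spec[of _ 1] simp: mult_ac)

lemma nn_integral_exp_sum_vinner_le:
  assumes "finite J"
  shows "(\<integral>\<^sup>+D. ennreal (exp (\<Sum>j\<in>J. vinner d (w j) (\<lambda>k. D j k - mean j k))) \<partial>PiM J M)
    \<le> ennreal (exp (\<sigma>\<^sup>2 / 2 * (\<Sum>j\<in>J. vinner d (w j) (w j))))"
proof -
  interpret product_sigma_finite M by (rule product_sigma_finite_M)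
  have "(\<integral>\<^sup>+D. ennreal (exp (\<Sum>j\<in>J. vinner d (w j) (\<lambda>k. D j k - mean j k))) \<partial>PiM J M)
      = (\<integral>\<^sup>+D. (\<Prod>j\<in>J. ennreal (exp (vinner d (w j) (\<lambda>k. D j k - mean j k)))) \<partial>PiM J M)"
    using assms by (simp add: exp_sum prod_ennreal)
  also have "\<dots> = (\<Prod>j\<in>J. (\<integral>\<^sup>+x. ennreal (exp (vinner d (w j) (\<lambda>k. x k - mean j k))) \<partial>M j))"
  proof (intro product_nn_integral_prod[OF assms])
    fix j
    have "(\<lambda>x. vinner d (w j) (\<lambda>k. x k - mean j k)) \<in> borel_measurable (M j)"
      by (intro borel_measurable_vinner borel_measurable_diff measurable_coordinate) auto
    thus "(\<lambda>x. ennreal (exp (vinner d (w j) (\<lambda>k. x k - mean j k)))) \<in> borel_measurable (M j)"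
      by measurable
  qed
  also have "\<dots> \<le> (\<Prod>j\<in>J. ennreal (exp (\<sigma>\<^sup>2 / 2 * vinner d (w j) (w j))))"
    by (intro prod_mono_ennreal nn_integral_exp_vinner_le)
  also have "\<dots> = ennreal (exp (\<sigma>\<^sup>2 / 2 * (\<Sum>j\<in>J. vinner d (w j) (w j))))"
    using assms by (simp add: prod_ennreal exp_sum sum_distrib_left)
  finally show ?thesis .
qed

lemma nn_integral_exp_sum_vinner_reindex_le:
  assumes J: "finite J" and A: "finite A" and g: "inj_on g A" "g ` A \<subseteq> J"
  shows "(\<integral>\<^sup>+D. ennreal (exp (\<Sum>s\<in>A. vinner d (w s) (\<lambda>k. D (g s) k - mean (g s) k))) \<partial>PiM J M)
    \<le> ennreal (exp (\<sigma>\<^sup>2 / 2 * (\<Sum>s\<in>A. vinner d (w s) (w s))))"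
proof -
  define W where "W j = (if j \<in> g ` A then w (the_inv_into A g j) else (\<lambda>_. 0))" for j
  have W_g: "W (g s) = w s" if "s \<in> A" for s
    using that g by (simp add: W_def the_inv_into_f_f)
  have reindex: "(\<Sum>j\<in>J. F j (W j)) = (\<Sum>s\<in>A. F (g s) (w s))" if "\<And>j. F j (\<lambda>_. 0) = 0" for F :: "nat \<Rightarrow> (nat \<Rightarrow> real) \<Rightarrow> real"
  proof -
    have "(\<Sum>j\<in>J. F j (W j)) = (\<Sum>j\<in>g ` A. F j (W j))"
      using J g that by (intro sum.mono_neutral_right) (auto simp: W_def)
    also have "\<dots> = (\<Sum>s\<in>A. F (g s) (w s))"
      using g by (simp add: sum.reindex W_g)
    finally show ?thesis .
  qed
  have "(\<Sum>j\<in>J. vinner d (W j) (\<lambda>k. D j k - mean j k)) = (\<Sum>s\<in>A. vinner d (w s) (\<lambda>k. D (g s) k - mean (g s) k))" for D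
    by (rule reindex) (simp add: vinner_def)
  moreover have "(\<Sum>j\<in>J. vinner d (W j) (W j)) = (\<Sum>s\<in>A. vinner d (w s) (w s))"
    by (rule reindex) (simp add: vinner_def)
  ultimately show ?thesis
    using nn_integral_exp_sum_vinner_le[OF J, of W] by simp
qed

lemma nn_integral_exp_sum_vinner_diff_le:
  fixes a b :: "nat \<Rightarrow> nat"
  assumes J: "finite J" and S: "finite S" and inj: "inj_on a S" "inj_on b S"
    and a_neq_b: "\<And>i j. i \<in> S \<Longrightarrow> j \<in> S \<Longrightarrow> a i \<noteq> b j" and "a ` S \<subseteq> J" "b ` S \<subseteq> J"
  shows "(\<integral>\<^sup>+D. ennreal (exp (\<Sum>i\<in>S. vinner d (u i)
              (\<lambda>k. (D (a i) k - mean (a i) k) - (D (b i) k - mean (b i) k)))) \<partial>PiM J M)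
    \<le> ennreal (exp (\<sigma>\<^sup>2 * (\<Sum>i\<in>S. vinner d (u i) (u i))))"
proof -
  define g where "g p = (if snd p then a (fst p) else b (fst p))" for p :: "nat \<times> bool"
  define w where "w p = (if snd p then u (fst p) else (\<lambda>k. - u (fst p) k))" for p :: "nat \<times> bool"
  have "inj_on g (S \<times> UNIV)"
    using inj a_neq_b by (auto simp: inj_on_def g_def split: if_splits) (metis+)
  moreover have "g ` (S \<times> UNIV) \<subseteq> J" using assms by (auto simp: g_def)
  moreover have split: "(\<Sum>p\<in>S \<times> UNIV. F p) = (\<Sum>i\<in>S. F (i, True) + F (i, False))" for F :: "nat \<times> bool \<Rightarrow> real"
  proof -
    have "(\<Sum>p\<in>S \<times> UNIV. F p) = (\<Sum>i\<in>S. \<Sum>t\<in>UNIV. F (i, t))"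
      by (simp add: sum.cartesian_product)
    thus ?thesis by (simp add: UNIV_bool add.commute)
  qed
  ultimately show ?thesis
    using nn_integral_exp_sum_vinner_reindex_le[OF J _ _ _, of "S \<times> UNIV" g w] S
    by (simp add: split w_def g_def vinner_def sum.distrib[symmetric] sum_distrib_left algebra_simps)
qed

end

locale indep_pairs = indep_subgaussian_vectors +
  fixes n N :: nat and a b :: "nat \<Rightarrow> nat"
  assumes inj_a: "inj_on a {..<n}" and inj_b: "inj_on b {..<n}"
    and a_neq_b: "\<And>i j. i < n \<Longrightarrow> j < n \<Longrightarrow> a i \<noteq> b j"
    and a_less: "\<And>i. i < n \<Longrightarrow> a i < N" and b_less: "\<And>i. i < n \<Longrightarrow> b i < N"
begin

definition centred_diff :: "nat \<Rightarrow> (nat \<Rightarrow> nat \<Rightarrow> real) \<Rightarrow> nat \<Rightarrow> real" where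
  "centred_diff i D = (\<lambda>k. (D (a i) k - mean (a i) k) - (D (b i) k - mean (b i) k))"

definition offdiag_form :: "(nat \<Rightarrow> nat \<Rightarrow> real) \<Rightarrow> real" where
  "offdiag_form D = (\<Sum>i<n. \<Sum>j\<in>{..<n} - {i}. vinner d (centred_diff i D) (centred_diff j D))"

lemma measurable_centred_diff:
  "a i \<in> J \<Longrightarrow> b i \<in> J \<Longrightarrow> k < d \<Longrightarrow> (\<lambda>D. centred_diff i D k) \<in> borel_measurable (PiM J M)"
  unfolding centred_diff_def by (intro borel_measurable_diff measurable_data_coordinate borel_measurable_const) auto

lemma measurable_offdiag_form: "offdiag_form \<in> borel_measurable (PiM {..<N} M)"
  unfolding offdiag_form_def
  by (intro borel_measurable_sum borel_measurable_vinner measurable_centred_diff) (auto simp: a_less b_less)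

lemma pair_coordinates_outside:
  assumes "S \<subseteq> {..<n}" "j < n" "j \<notin> S"
  shows "a j \<notin> a ` S \<union> b ` S" "b j \<notin> a ` S \<union> b ` S"
  using assms inj_a inj_b a_neq_b by (auto simp: inj_on_def; metis lessThan_iff subsetD)+

lemma centred_diff_merge:
  assumes "I \<inter> J = {}"
  shows "a i \<in> I \<Longrightarrow> b i \<in> I \<Longrightarrow> centred_diff i (merge I J (x, y)) = centred_diff i x"
    and "a i \<in> J \<Longrightarrow> b i \<in> J \<Longrightarrow> centred_diff i (merge I J (x, y)) = centred_diff i y"
  using assms by (auto simp: centred_diff_def merge_def)

lemma nn_integral_exp_sum_vinner_centred_diff_le:
  assumes "finite J" "S \<subseteq> {..<n}" "a ` S \<subseteq> J" "b ` S \<subseteq> J"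
  shows "(\<integral>\<^sup>+D. ennreal (exp (\<Sum>i\<in>S. vinner d (u i) (centred_diff i D))) \<partial>PiM J M)
    \<le> ennreal (exp (\<sigma>\<^sup>2 * (\<Sum>i\<in>S. vinner d (u i) (u i))))"
proof -
  have "a i \<noteq> b j" if "i \<in> S" "j \<in> S" for i j
    using that assms(2) a_neq_b by blast
  thus ?thesis
    unfolding centred_diff_def using assms
    by (intro nn_integral_exp_sum_vinner_diff_le)
       (auto intro: inj_on_subset[OF inj_a] inj_on_subset[OF inj_b] finite_subset)
qed

lemma nn_integral_exp_coordinate_sum_le:
  assumes "finite J" "T \<subseteq> {..<n}" "a ` T \<subseteq> J" "b ` T \<subseteq> J" "k < d"
  shows "(\<integral>\<^sup>+x. ennreal (exp (\<theta> * (\<Sum>j\<in>T. centred_diff j x k))) \<partial>PiM J M) \<le> ennreal (exp (\<theta>\<^sup>2 * (card T * \<sigma>\<^sup>2)))"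
proof -
  define e where "e = (\<lambda>k'. if k' = k then \<theta> else 0)"
  have "\<theta> * (\<Sum>j\<in>T. centred_diff j x k) = (\<Sum>j\<in>T. vinner d e (centred_diff j x))" for x
    using assms by (simp add: e_def vinner_unit_left sum_distrib_left)
  moreover have "vinner d e e = \<theta>\<^sup>2"
    using assms by (simp add: e_def vinner_unit_left power2_eq_square)
  ultimately show ?thesis
    using nn_integral_exp_sum_vinner_centred_diff_le[OF assms(1-4), of "\<lambda>_. e"] by (simp add: mult_ac)
qed

lemma nn_integral_exp_cross_le:
  assumes S: "S \<subseteq> {..<n}"
  defines "CT \<equiv> {..<N} - (a ` S \<union> b ` S)"
  shows "(\<integral>\<^sup>+D. ennreal (exp (\<kappa> * (\<Sum>i\<in>S. \<Sum>j\<in>{..<n} - S. vinner d (centred_diff i D) (centred_diff j D)))) \<partial>PiM {..<N} M)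
    \<le> (\<integral>\<^sup>+x. ennreal (exp (\<sigma>\<^sup>2 * card S * \<kappa>\<^sup>2 * (\<Sum>k<d. (\<Sum>j\<in>{..<n} - S. centred_diff j x k)\<^sup>2))) \<partial>PiM CT M)"
proof -
  interpret product_sigma_finite M by (rule product_sigma_finite_M)
  define T where "T = {..<n} - S"
  define CS where "CS = a ` S \<union> b ` S"
  \<comment> \<open>The pairs in S and in T use disjoint coordinates, so conditionally on the coordinates
    in CT the form is linear in the independent vectors indexed by CS.\<close>
  have "finite S" using S by (auto intro: finite_subset)
  have "CT \<inter> CS = {}" "finite CT" "finite CS" "CT \<union> CS = {..<N}"
    using S a_less b_less \<open>finite S\<close> by (auto simp: CT_def CS_def)
  have in_CS: "a i \<in> CS" "b i \<in> CS" if "i \<in> S" for i using that by (auto simp: CS_def)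
  have in_CT: "a j \<in> CT" "b j \<in> CT" if "j \<in> T" for j
    using that pair_coordinates_outside[OF S] a_less b_less by (auto simp: T_def CT_def)
  define X where "X x k = (\<Sum>j\<in>T. centred_diff j x k)" for x k
  have bilinear: "(\<Sum>i\<in>S. \<Sum>j\<in>T. vinner d (centred_diff i D) (centred_diff j D)) = (\<Sum>i\<in>S. vinner d (X D) (centred_diff i D))" for D
    unfolding X_def vinner_def by (simp add: sum_distrib_left sum_distrib_right mult_ac sum.swap[of _ T])
  define f where "f D = ennreal (exp (\<kappa> * (\<Sum>i\<in>S. vinner d (X D) (centred_diff i D))))" for D
  have "(\<lambda>D. \<Sum>i\<in>S. vinner d (X D) (centred_diff i D)) \<in> borel_measurable (PiM (CT \<union> CS) M)"
    using in_CS in_CT S unfolding X_def \<open>CT \<union> CS = {..<N}\<close> T_def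
    by (intro borel_measurable_sum borel_measurable_vinner measurable_centred_diff) (auto simp: a_less b_less)
  hence f_meas: "f \<in> borel_measurable (PiM (CT \<union> CS) M)"
    unfolding f_def by measurable
  have inner: "(\<integral>\<^sup>+y. f (merge CT CS (x, y)) \<partial>PiM CS M)
      \<le> ennreal (exp (\<sigma>\<^sup>2 * card S * \<kappa>\<^sup>2 * (\<Sum>k<d. (X x k)\<^sup>2)))" for x
  proof -
    have "X (merge CT CS (x, y)) = X x" "centred_diff i (merge CT CS (x, y)) = centred_diff i y" if "i \<in> S" for y i
      using centred_diff_merge[OF \<open>CT \<inter> CS = {}\<close>] in_CT in_CS that by (auto simp: X_def)
    hence "(\<integral>\<^sup>+y. f (merge CT CS (x, y)) \<partial>PiM CS M)
        = (\<integral>\<^sup>+y. ennreal (exp (\<Sum>i\<in>S. vinner d (\<lambda>k. \<kappa> * X x k) (centred_diff i y))) \<partial>PiM CS M)"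
      unfolding f_def by (simp add: vinner_def sum_distrib_left mult.assoc cong: sum.cong)
    also have "\<dots> \<le> ennreal (exp (\<sigma>\<^sup>2 * (\<Sum>i\<in>S. vinner d (\<lambda>k. \<kappa> * X x k) (\<lambda>k. \<kappa> * X x k))))"
      using S \<open>finite CS\<close> by (intro nn_integral_exp_sum_vinner_centred_diff_le) (auto simp: CS_def)
    also have "\<dots> = ennreal (exp (\<sigma>\<^sup>2 * card S * \<kappa>\<^sup>2 * (\<Sum>k<d. (X x k)\<^sup>2)))"
      by (simp add: vinner_def power2_eq_square sum_distrib_left mult_ac)
    finally show ?thesis .
  qed
  have "(\<integral>\<^sup>+D. ennreal (exp (\<kappa> * (\<Sum>i\<in>S. \<Sum>j\<in>{..<n} - S. vinner d (centred_diff i D) (centred_diff j D)))) \<partial>PiM {..<N} M)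
      = integral\<^sup>N (PiM (CT \<union> CS) M) f"
    unfolding f_def \<open>CT \<union> CS = {..<N}\<close> T_def[symmetric] bilinear ..
  also have "\<dots> = (\<integral>\<^sup>+x. (\<integral>\<^sup>+y. f (merge CT CS (x, y)) \<partial>PiM CS M) \<partial>PiM CT M)"
    using \<open>CT \<inter> CS = {}\<close> \<open>finite CT\<close> \<open>finite CS\<close> f_meas by (rule product_nn_integral_fold)
  also have "\<dots> \<le> (\<integral>\<^sup>+x. ennreal (exp (\<sigma>\<^sup>2 * card S * \<kappa>\<^sup>2 * (\<Sum>k<d. (X x k)\<^sup>2))) \<partial>PiM CT M)"
    by (intro nn_integral_mono inner)
  finally show ?thesis unfolding X_def T_def .
qed

lemma nn_integral_exp_decoupled_le:
  assumes S: "S \<subseteq> {..<n}" and small: "real d * \<kappa>\<^sup>2 * \<sigma>^4 * (real n)\<^sup>2 \<le> 1/64"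
  shows "(\<integral>\<^sup>+D. ennreal (exp (\<kappa> * (\<Sum>i\<in>S. \<Sum>j\<in>{..<n} - S. vinner d (centred_diff i D) (centred_diff j D)))) \<partial>PiM {..<N} M)
    \<le> ennreal (exp (64 * real d * \<kappa>\<^sup>2 * \<sigma>^4 * (real n)\<^sup>2))"
proof -
  define T where "T = {..<n} - S"
  define CT where "CT = {..<N} - (a ` S \<union> b ` S)"
  have T: "T \<subseteq> {..<n}" "finite T" by (auto simp: T_def)
  have "finite CT" by (simp add: CT_def)
  have in_CT: "a j \<in> CT" "b j \<in> CT" if "j \<in> T" for j
    using that pair_coordinates_outside[OF S] a_less b_less by (auto simp: T_def CT_def)
  have sizes: "real d * (\<sigma>\<^sup>2 * card S * \<kappa>\<^sup>2) * (card T * \<sigma>\<^sup>2) \<le> real d * \<kappa>\<^sup>2 * \<sigma>^4 * (real n)\<^sup>2"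
  proof -
    have "real (card S) * real (card T) \<le> real n * real n"
      using card_mono[OF _ S] card_mono[OF _ T(1)] by (intro mult_mono) auto
    hence "real d * \<kappa>\<^sup>2 * \<sigma>^4 * (real (card S) * real (card T)) \<le> real d * \<kappa>\<^sup>2 * \<sigma>^4 * (real n * real n)"
      by (intro mult_left_mono) auto
    thus ?thesis
      by (simp add: power2_eq_square power4_eq_xxxx mult_ac)
  qed
  have "(\<integral>\<^sup>+D. ennreal (exp (\<kappa> * (\<Sum>i\<in>S. \<Sum>j\<in>T. vinner d (centred_diff i D) (centred_diff j D)))) \<partial>PiM {..<N} M)
      \<le> (\<integral>\<^sup>+x. ennreal (exp ((\<sigma>\<^sup>2 * card S * \<kappa>\<^sup>2) * (\<Sum>k<d. (\<Sum>j\<in>T. centred_diff j x k)\<^sup>2))) \<partial>PiM CT M)"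
    using nn_integral_exp_cross_le[OF S] by (simp add: T_def CT_def)
  also have "\<dots> \<le> ennreal (exp (64 * real d * (\<sigma>\<^sup>2 * card S * \<kappa>\<^sup>2) * (card T * \<sigma>\<^sup>2)))"
    using sizes small in_CT T \<open>finite CT\<close>
    by (intro nn_integral_exp_sum_squares_le prob_space_PiM prob_space_M borel_measurable_sum measurable_centred_diff
          nn_integral_exp_coordinate_sum_le) auto
  also have "\<dots> \<le> ennreal (exp (64 * real d * \<kappa>\<^sup>2 * \<sigma>^4 * (real n)\<^sup>2))"
    using sizes by (intro ennreal_leI) (simp add: mult.assoc)
  finally show ?thesis unfolding T_def .
qed

lemma nn_integral_exp_offdiag_le:
  assumes "2 \<le> n" and small: "1024 * real d * \<eta>\<^sup>2 * \<sigma>^4 * (real n)\<^sup>2 \<le> 1"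
  shows "(\<integral>\<^sup>+D. ennreal (exp (\<eta> * offdiag_form D)) \<partial>PiM {..<N} M)
    \<le> ennreal (exp (1024 * real d * \<eta>\<^sup>2 * \<sigma>^4 * (real n)\<^sup>2))"
proof -
  define R where "R S D = 4 * \<eta> * (\<Sum>i\<in>S. \<Sum>j\<in>{..<n} - S. vinner d (centred_diff i D) (centred_diff j D))" for S D
  have "(2::real) ^ n = 4 * 2 ^ (n - 2)"
    using le_Suc_ex[OF \<open>2 \<le> n\<close>] by (auto simp: power_add)
  hence avg: "\<eta> * offdiag_form D = (\<Sum>S\<in>Pow {..<n}. R S D) / card (Pow {..<n})" for D
    unfolding R_def offdiag_form_def by (simp add: sum_distrib_left[symmetric] sum_Pow_cross_eq card_Pow)
  have "(\<integral>\<^sup>+D. ennreal (exp ((\<Sum>S\<in>Pow {..<n}. R S D) / card (Pow {..<n}))) \<partial>PiM {..<N} M)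
      \<le> ennreal (exp (64 * real d * (4 * \<eta>)\<^sup>2 * \<sigma>^4 * (real n)\<^sup>2))"
  proof (rule nn_integral_exp_mean_le)
    fix S assume "S \<in> Pow {..<n}"
    thus "R S \<in> borel_measurable (PiM {..<N} M)"
      unfolding R_def
      by (intro borel_measurable_times borel_measurable_const borel_measurable_sum borel_measurable_vinner measurable_centred_diff)
         (auto simp: a_less b_less)
    show "(\<integral>\<^sup>+D. ennreal (exp (R S D)) \<partial>PiM {..<N} M) \<le> ennreal (exp (64 * real d * (4 * \<eta>)\<^sup>2 * \<sigma>^4 * (real n)\<^sup>2))"
      using \<open>S \<in> Pow {..<n}\<close> small unfolding R_def
      by (intro nn_integral_exp_decoupled_le) (auto simp: power_mult_distrib)
  qed auto
  thus ?thesis by (simp add: avg power_mult_distrib mult.assoc)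
qed

lemma nn_integral_exp_offdiag_normalized_le:
  assumes "2 \<le> n" and small: "16384 * real d * t\<^sup>2 * \<sigma>^4 \<le> (real n)\<^sup>2"
  shows "(\<integral>\<^sup>+D. ennreal (exp (2 * t / (real n * (real n - 1)) * offdiag_form D)) \<partial>PiM {..<N} M)
    \<le> ennreal (exp (16384 * real d * t\<^sup>2 * \<sigma>^4 / (real n)\<^sup>2))"
proof -
  define \<eta> where "\<eta> = 2 * t / (real n * (real n - 1))"
  have "real n - 1 \<ge> 1" using assms by simp
  have "0 \<le> (real n - 2) * (3 * real n - 2)" using assms by simp
  hence "(real n)\<^sup>2 \<le> 4 * (real n - 1)\<^sup>2" by (simp add: power2_eq_square algebra_simps)
  have "\<eta> * real n = 2 * t / (real n - 1)" using \<open>real n - 1 \<ge> 1\<close> by (simp add: \<eta>_def)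
  have "1024 * real d * \<eta>\<^sup>2 * \<sigma>^4 * (real n)\<^sup>2 = 1024 * real d * \<sigma>^4 * (\<eta> * real n)\<^sup>2"
    by (simp add: power_mult_distrib mult_ac)
  also have "\<dots> = 4096 * real d * t\<^sup>2 * \<sigma>^4 / (real n - 1)\<^sup>2"
    unfolding \<open>\<eta> * real n = 2 * t / (real n - 1)\<close> by (simp add: power_divide power_mult_distrib)
  also have "\<dots> \<le> 4096 * real d * t\<^sup>2 * \<sigma>^4 / ((real n)\<^sup>2 / 4)"
    using \<open>(real n)\<^sup>2 \<le> 4 * (real n - 1)\<^sup>2\<close> \<open>2 \<le> n\<close> by (intro divide_left_mono) auto
  also have "\<dots> = 16384 * real d * t\<^sup>2 * \<sigma>^4 / (real n)\<^sup>2" by simp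
  finally have bound: "1024 * real d * \<eta>\<^sup>2 * \<sigma>^4 * (real n)\<^sup>2 \<le> 16384 * real d * t\<^sup>2 * \<sigma>^4 / (real n)\<^sup>2" .
  also have "\<dots> \<le> 1" using small \<open>2 \<le> n\<close> by (simp add: divide_le_eq)
  finally have "1024 * real d * \<eta>\<^sup>2 * \<sigma>^4 * (real n)\<^sup>2 \<le> 1" .
  hence "(\<integral>\<^sup>+D. ennreal (exp (\<eta> * offdiag_form D)) \<partial>PiM {..<N} M)
      \<le> ennreal (exp (1024 * real d * \<eta>\<^sup>2 * \<sigma>^4 * (real n)\<^sup>2))"
    by (rule nn_integral_exp_offdiag_le[OF \<open>2 \<le> n\<close>])
  also have "\<dots> \<le> ennreal (exp (16384 * real d * t\<^sup>2 * \<sigma>^4 / (real n)\<^sup>2))"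
    using bound by (intro ennreal_leI) simp
  finally show ?thesis unfolding \<eta>_def .
qed

end

section \<open>The two-sample statistic\<close>

locale two_mean_pairs = indep_pairs +
  fixes \<mu>P \<mu>Q :: "nat \<Rightarrow> real" and from_P :: "nat \<Rightarrow> bool"
  assumes mean_eq: "\<And>j. mean j = (if from_P j then \<mu>P else \<mu>Q)"
begin

definition pair_sign :: "nat \<Rightarrow> real" where
  "pair_sign i = of_bool (from_P (a i)) - of_bool (from_P (b i))"

definition sign_weight :: "nat \<Rightarrow> real" where
  "sign_weight i = (\<Sum>j\<in>{..<n} - {i}. pair_sign j)"

definition mean_gap :: real where
  "mean_gap = (\<Sum>k<d. (\<mu>P k - \<mu>Q k)\<^sup>2)"

definition linear_part :: "(nat \<Rightarrow> nat \<Rightarrow> real) \<Rightarrow> real" where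
  "linear_part D = (\<Sum>i<n. sign_weight i * vinner d (\<lambda>k. \<mu>P k - \<mu>Q k) (centred_diff i D))"

definition const_part :: real where
  "const_part = (\<Sum>i<n. \<Sum>j\<in>{..<n} - {i}. pair_sign i * pair_sign j) * mean_gap"

lemma data_diff_eq: "D (a i) k - D (b i) k = centred_diff i D k + pair_sign i * (\<mu>P k - \<mu>Q k)"
  by (simp add: centred_diff_def pair_sign_def mean_eq algebra_simps)

lemma offdiag_data_decomp:
  "(\<Sum>i<n. \<Sum>j\<in>{..<n} - {i}. vinner d (\<lambda>k. D (a i) k - D (b i) k) (\<lambda>k. D (a j) k - D (b j) k))
    = offdiag_form D + 2 * linear_part D + const_part"
proof -
  define \<delta> where "\<delta> = (\<lambda>k. \<mu>P k - \<mu>Q k)"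
  have expand: "vinner d (\<lambda>k. D (a i) k - D (b i) k) (\<lambda>k. D (a j) k - D (b j) k)
      = vinner d (centred_diff i D) (centred_diff j D) + pair_sign j * vinner d \<delta> (centred_diff i D)
        + pair_sign i * vinner d \<delta> (centred_diff j D) + pair_sign i * pair_sign j * mean_gap" for i j
    unfolding data_diff_eq vinner_def mean_gap_def \<delta>_def
    by (simp only: sum_distrib_left sum.distrib[symmetric])
       (intro sum.cong refl, simp add: algebra_simps power2_eq_square)
  have "(\<Sum>i<n. \<Sum>j\<in>{..<n} - {i}. pair_sign j * vinner d \<delta> (centred_diff i D)) = linear_part D"
    by (simp add: linear_part_def sign_weight_def sum_distrib_right \<delta>_def)
  moreover have "(\<Sum>i<n. \<Sum>j\<in>{..<n} - {i}. pair_sign i * vinner d \<delta> (centred_diff j D)) = linear_part D"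
    by (subst sum_offdiag_swap) (simp_all add: linear_part_def sign_weight_def sum_distrib_right \<delta>_def)
  ultimately show ?thesis
    by (simp add: expand sum.distrib offdiag_form_def const_part_def sum_distrib_right)
qed

lemma abs_sign_weight_le:
  assumes "i < n"
  shows "\<bar>sign_weight i\<bar> \<le> real n - 1"
proof -
  have "\<bar>sign_weight i\<bar> \<le> (\<Sum>j\<in>{..<n} - {i}. \<bar>pair_sign j\<bar>)"
    unfolding sign_weight_def by (rule sum_abs)
  also have "\<dots> \<le> (\<Sum>j\<in>{..<n} - {i}. 1)"
    by (intro sum_mono) (simp add: pair_sign_def)
  also have "\<dots> = real n - 1" using assms by (simp add: of_nat_diff)
  finally show ?thesis .
qed

lemma measurable_linear_part: "linear_part \<in> borel_measurable (PiM {..<N} M)"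
  unfolding linear_part_def
  by (intro borel_measurable_times borel_measurable_const borel_measurable_sum
        borel_measurable_vinner measurable_centred_diff) (auto simp: a_less b_less)

lemma nn_integral_exp_linear_part_le:
  "(\<integral>\<^sup>+D. ennreal (exp (\<theta> * linear_part D)) \<partial>PiM {..<N} M)
    \<le> ennreal (exp (\<sigma>\<^sup>2 * \<theta>\<^sup>2 * (real n * (real n - 1)\<^sup>2) * mean_gap))"
proof -
  define u where "u i = (\<lambda>k. \<theta> * sign_weight i * (\<mu>P k - \<mu>Q k))" for i
  have "\<theta> * linear_part D = (\<Sum>i<n. vinner d (u i) (centred_diff i D))" for D
    by (simp add: linear_part_def u_def vinner_def sum_distrib_left mult_ac)
  hence "(\<integral>\<^sup>+D. ennreal (exp (\<theta> * linear_part D)) \<partial>PiM {..<N} M)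
      \<le> ennreal (exp (\<sigma>\<^sup>2 * (\<Sum>i<n. vinner d (u i) (u i))))"
    using a_less b_less by (simp add: nn_integral_exp_sum_vinner_centred_diff_le image_subset_iff)
  also have "\<dots> \<le> ennreal (exp (\<sigma>\<^sup>2 * \<theta>\<^sup>2 * (real n * (real n - 1)\<^sup>2) * mean_gap))"
  proof (intro ennreal_leI exp_mono)
    have "(\<Sum>i<n. vinner d (u i) (u i)) = (\<Sum>i<n. \<theta>\<^sup>2 * mean_gap * (sign_weight i)\<^sup>2)"
      by (intro sum.cong refl) (simp add: u_def vinner_def mean_gap_def sum_distrib_left power2_eq_square mult_ac)
    also have "\<dots> = \<theta>\<^sup>2 * mean_gap * (\<Sum>i<n. (sign_weight i)\<^sup>2)"
      by (simp add: sum_distrib_left)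
    also have "\<dots> \<le> \<theta>\<^sup>2 * mean_gap * (\<Sum>i<n. (real n - 1)\<^sup>2)"
      using abs_sign_weight_le
      by (intro mult_left_mono sum_mono power2_le_iff_abs_le[THEN iffD2]) (auto simp: mean_gap_def sum_nonneg)
    finally have "\<sigma>\<^sup>2 * (\<Sum>i<n. vinner d (u i) (u i)) \<le> \<sigma>\<^sup>2 * (\<theta>\<^sup>2 * mean_gap * (\<Sum>i<n. (real n - 1)\<^sup>2))"
      by (rule mult_left_mono) simp
    thus "\<sigma>\<^sup>2 * (\<Sum>i<n. vinner d (u i) (u i)) \<le> \<sigma>\<^sup>2 * \<theta>\<^sup>2 * (real n * (real n - 1)\<^sup>2) * mean_gap"
      by (simp add: mult_ac)
  qed
  finally show ?thesis .
qed

definition statistic :: "(nat \<Rightarrow> nat \<Rightarrow> real) \<Rightarrow> real" where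
  "statistic D = (\<Sum>i<n. \<Sum>j\<in>{..<n} - {i}.
      vinner d (\<lambda>k. D (a i) k - D (b i) k) (\<lambda>k. D (a j) k - D (b j) k)) / (real n * (real n - 1))"

lemma nn_integral_exp_statistic_le:
  assumes "2 \<le> n" and small: "16384 * real d * t\<^sup>2 * \<sigma>^4 \<le> (real n)\<^sup>2"
  shows "(\<integral>\<^sup>+D. ennreal (exp (t * (statistic D - const_part / (real n * (real n - 1))))) \<partial>PiM {..<N} M)
    \<le> ennreal (exp (max (16384 * real d * t\<^sup>2 * \<sigma>^4 / (real n)\<^sup>2) (16 * t\<^sup>2 * \<sigma>\<^sup>2 * mean_gap / real n)))"
proof -
  define nn where "nn = real n * (real n - 1)"
  have "real n > 0" "real n - 1 > 0" "nn > 0" using assms by (auto simp: nn_def)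
  \<comment> \<open>Averaging over the two values of c lets the quadratic and the linear term be bounded separately.\<close>
  define g where "g c D = (if c then 2 * t / nn * offdiag_form D else 4 * t / nn * linear_part D)" for c D
  have split: "t * (statistic D - const_part / nn) = (\<Sum>c\<in>UNIV. g c D) / card (UNIV :: bool set)" for D
    using \<open>nn > 0\<close> unfolding statistic_def offdiag_data_decomp g_def nn_def[symmetric]
    by (simp add: UNIV_bool field_simps)
  have linear_const: "\<sigma>\<^sup>2 * (4 * t / nn)\<^sup>2 * (real n * (real n - 1)\<^sup>2) * mean_gap = 16 * t\<^sup>2 * \<sigma>\<^sup>2 * mean_gap / real n"
  proof -
    have "4 * t / nn * (real n - 1) = 4 * t / real n" using \<open>real n - 1 > 0\<close> by (simp add: nn_def)
    hence "(4 * t / nn)\<^sup>2 * (real n * (real n - 1)\<^sup>2) = real n * (4 * t / real n)\<^sup>2"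
      by (metis power_mult_distrib mult.commute mult.left_commute)
    also have "\<dots> = 16 * t\<^sup>2 / real n"
      using \<open>real n > 0\<close> by (simp add: power_divide power2_eq_square)
    finally show ?thesis by (simp add: mult_ac)
  qed
  have "(\<integral>\<^sup>+D. ennreal (exp ((\<Sum>c\<in>UNIV. g c D) / card (UNIV :: bool set))) \<partial>PiM {..<N} M)
      \<le> ennreal (exp (max (16384 * real d * t\<^sup>2 * \<sigma>^4 / (real n)\<^sup>2) (16 * t\<^sup>2 * \<sigma>\<^sup>2 * mean_gap / real n)))"
  proof (rule nn_integral_exp_mean_le)
    fix c :: bool
    show "g c \<in> borel_measurable (PiM {..<N} M)"
      using measurable_offdiag_form measurable_linear_part
      by (cases c) (auto simp: g_def[abs_def] intro!: borel_measurable_times)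
    show "(\<integral>\<^sup>+D. ennreal (exp (g c D)) \<partial>PiM {..<N} M)
        \<le> ennreal (exp (max (16384 * real d * t\<^sup>2 * \<sigma>^4 / (real n)\<^sup>2) (16 * t\<^sup>2 * \<sigma>\<^sup>2 * mean_gap / real n)))"
    proof (cases c)
      case True
      thus ?thesis
        using nn_integral_exp_offdiag_normalized_le[OF assms]
        by (fastforce simp: g_def nn_def intro: order_trans ennreal_leI)
    next
      case False
      thus ?thesis
        using nn_integral_exp_linear_part_le[of "4 * t / nn"] linear_const
        by (fastforce simp: g_def intro: order_trans ennreal_leI)
    qed
  qed auto
  thus ?thesis unfolding nn_def[symmetric] split .
qed

lemma subexponential_statistic:
  assumes "2 \<le> n" "\<sigma> \<ge> 0"
  shows "subexponential (PiM {..<N} M) statistic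
     (128 * max (sqrt (real d) * \<sigma>\<^sup>2 / real n) (sqrt mean_gap * \<sigma> / sqrt (real n)))"
proof -
  define A B where "A = sqrt (real d) * \<sigma>\<^sup>2 / real n" and "B = sqrt mean_gap * \<sigma> / sqrt (real n)"
  have "mean_gap \<ge> 0" by (simp add: mean_gap_def sum_nonneg)
  have A: "A \<ge> 0" "A\<^sup>2 = real d * \<sigma>^4 / (real n)\<^sup>2"
    using assms by (simp_all add: A_def power_divide power_mult_distrib)
  have B: "B \<ge> 0" "B\<^sup>2 = mean_gap * \<sigma>\<^sup>2 / real n"
    using assms \<open>mean_gap \<ge> 0\<close> by (simp_all add: B_def power_divide power_mult_distrib)
  have "subexponential (PiM {..<N} M) statistic (128 * max A B)"
  proof (rule subexponential_of_mgf_le[where c = "const_part / (real n * (real n - 1))"])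
    show "prob_space (PiM {..<N} M)" by (intro prob_space_PiM prob_space_M)
    show "statistic \<in> borel_measurable (PiM {..<N} M)"
      unfolding statistic_def[abs_def]
      by (intro borel_measurable_divide borel_measurable_sum borel_measurable_vinner borel_measurable_diff
            measurable_data_coordinate borel_measurable_const) (auto simp: a_less b_less)
    show "128 * max A B \<ge> 0" using A(1) max.cobounded1[of A B] by linarith
    fix t assume "\<bar>t\<bar> * (128 * max A B) \<le> 1"
    note scaled = scaled_squares_le[OF A(1) B(1) this]
    have eqA: "16384 * real d * t\<^sup>2 * \<sigma>^4 / (real n)\<^sup>2 = 16384 * (t\<^sup>2 * A\<^sup>2)"
      and eqB: "16 * t\<^sup>2 * \<sigma>\<^sup>2 * mean_gap / real n = 16 * (t\<^sup>2 * B\<^sup>2)"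
      by (simp_all add: A(2) B(2) mult_ac)
    have "16384 * real d * t\<^sup>2 * \<sigma>^4 \<le> (real n)\<^sup>2"
      using scaled(1) assms unfolding eqA[symmetric] by (simp add: divide_le_eq)
    moreover have "max (16384 * real d * t\<^sup>2 * \<sigma>^4 / (real n)\<^sup>2) (16 * t\<^sup>2 * \<sigma>\<^sup>2 * mean_gap / real n)
        \<le> t\<^sup>2 * (128 * max A B)\<^sup>2"
      unfolding eqA eqB by (rule scaled(2))
    ultimately show "(\<integral>\<^sup>+D. ennreal (exp (t * (statistic D - const_part / (real n * (real n - 1))))) \<partial>PiM {..<N} M)
        \<le> ennreal (exp (t\<^sup>2 * (128 * max A B)\<^sup>2))"
      using nn_integral_exp_statistic_le[OF assms(1)] by (blast intro: order_trans ennreal_leI exp_mono)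
  qed
  thus ?thesis by (simp add: A_def B_def)
qed

end

lemma two_mean_pairs_pooled_sample:
  assumes "prob_space P" "sets P = sets (vec_space d)" "subgaussian_vec d P (\<sigma>\<^sup>2)"
    and "prob_space Q" "sets Q = sets (vec_space d)" "subgaussian_vec d Q (\<sigma>\<^sup>2)"
    and \<pi>: "\<pi> permutes {..<n1 + n2}" and l: "inj_on l {..<n1}" "l ` {..<n1} \<subseteq> {..<n2}"
  shows "two_mean_pairs d \<sigma> (\<lambda>i. if i < n1 then P else Q) n1 (n1 + n2) \<pi> (\<lambda>i. \<pi> (n1 + l i))
           (vmean d P) (vmean d Q) (\<lambda>j. j < n1)"
proof -
  have "inj \<pi>" using \<pi> by (rule permutes_inj)
  show ?thesis
  proof (intro two_mean_pairs.intro indep_pairs.intro indep_subgaussian_vectors.intro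
      indep_pairs_axioms.intro two_mean_pairs_axioms.intro)
    show "prob_space (if j < n1 then P else Q)" "sets (if j < n1 then P else Q) = sets (vec_space d)"
      "subgaussian_vec d (if j < n1 then P else Q) (\<sigma>\<^sup>2)" for j
      using assms by simp_all
    show "inj_on \<pi> {..<n1}" using \<open>inj \<pi>\<close> by (rule inj_on_subset) simp
    show "inj_on (\<lambda>i. \<pi> (n1 + l i)) {..<n1}"
      using l(1) by (auto simp: inj_on_def inj_eq[OF \<open>inj \<pi>\<close>])
    show "\<pi> i \<noteq> \<pi> (n1 + l j)" if "i < n1" for i j
      using that by (simp add: inj_eq[OF \<open>inj \<pi>\<close>])
    show "\<pi> i < n1 + n2" if "i < n1" for i
      using permutes_in_image[OF \<pi>, of i] that by simp
    show "\<pi> (n1 + l i) < n1 + n2" if "i < n1" for i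
      using permutes_in_image[OF \<pi>, of "n1 + l i"] l(2) that by auto
    show "vmean d (if j < n1 then P else Q) = (if j < n1 then vmean d P else vmean d Q)" for j
      by simp
  qed
qed

lemma subexponential_U_stat:
  assumes "2 \<le> n1" "0 \<le> \<sigma>"
    and "prob_space P" "sets P = sets (vec_space d)" "subgaussian_vec d P (\<sigma>\<^sup>2)"
    and "prob_space Q" "sets Q = sets (vec_space d)" "subgaussian_vec d Q (\<sigma>\<^sup>2)"
    and "\<pi> permutes {..<n1 + n2}" "inj_on l {..<n1}" "l ` {..<n1} \<subseteq> {..<n2}"
  shows "subexponential (pooled_law n1 n2 P Q) (U_stat d n1 l \<pi>)
           (128 * max (sqrt (real d) * \<sigma>\<^sup>2 / real n1)
                    (sqrt (\<Sum>k<d. (vmean d P k - vmean d Q k)\<^sup>2) * \<sigma> / sqrt (real n1)))"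
proof -
  interpret two_mean_pairs d \<sigma> "\<lambda>i. if i < n1 then P else Q" n1 "n1 + n2" \<pi> "\<lambda>i. \<pi> (n1 + l i)"
      "vmean d P" "vmean d Q" "\<lambda>j. j < n1"
    using assms by (intro two_mean_pairs_pooled_sample)
  have "U_stat d n1 l \<pi> = statistic" by (simp add: fun_eq_iff U_stat_def statistic_def)
  thus ?thesis
    using subexponential_statistic[OF assms(1,2)] by (simp add: pooled_law_def mean_gap_def)
qed

theorem mainTheorem14:
  "\<exists>C>0. \<forall>(d::nat) (\<sigma>::real) (n1::nat) (n2::nat) P Q \<pi> l.
     2 \<le> n1 \<and> n1 \<le> n2 \<and> 0 \<le> \<sigma> \<and>
     prob_space P \<and> sets P = sets (vec_space d) \<and>
     prob_space Q \<and> sets Q = sets (vec_space d) \<and>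
     subgaussian_vec d P (\<sigma>\<^sup>2) \<and> subgaussian_vec d Q (\<sigma>\<^sup>2) \<and>
     \<pi> permutes {..<n1+n2} \<and>
     inj_on l {..<n1} \<and> l ` {..<n1} \<subseteq> {..<n2}
     \<longrightarrow> subexponential (pooled_law n1 n2 P Q) (U_stat d n1 l \<pi>)
           (C * max (sqrt (real d) * \<sigma>\<^sup>2 / real n1)
                    (sqrt (\<Sum>k<d. (vmean d P k - vmean d Q k)\<^sup>2) * \<sigma> / sqrt (real n1)))"
  by (intro exI[of _ 128]) (auto intro: subexponential_U_stat)

end
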